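(* Every 5-basket is $(2P_3,C_4,C_6,C_7,T_0)$-free and contains an induced 3-pentagon. Moreover, every 5-basket is anticonnected and contains no simplicial and no universal vertices.
   Context: Graphs are finite, simple, nonnull. A graph is $(H_1,\dots,H_m)$-free if it has no induced subgraph isomorphic to any $H_i$. $P_k$, $C_k$ are the path and cycle on $k$ vertices; $2P_3$ is two disjoint copies of $P_3$. $T_0$ is the graph with vertices $p,q,u_0,u_1,u_2,u_3,w_1,w_2,w_3$ and edges $pq,pu_0,pu_2,pu_3,qu_1,qu_2,qu_3,u_0w_1,u_1w_1,u_2w_2,u_3w_3,w_1w_2,w_1w_3,w_2w_3$. The 3-pentagon is the graph on vertices $a,b_1,b_2,b_3,c_1,c_2,c_3$ where $a$ is adjacent to each $b_i$ and to no $c_i$, $\{b_1,b_2,b_3\}$ is stable, $\{c_1,c_2,c_3\}$ is a clique, and $b_ic_j$ is an edge iff $i=j$. A graph is anticonnected if its complement is connected. A vertex is simplicial if its neighbours form a (possibly empty) clique, universal if adjacent to all other vertices. For disjoint vertex sets $X,Y$, $X$ is complete (anticomplete) to $Y$ if every vertex of $X$ is adjacent (nonadjacent) to every vertex of $Y$. A 5-basket is a graph $Q$ whose vertex set partitions into $A,B_1,B_2,B_3,C_1,C_2,C_3,F$ where $A,B_i,C_i$ are nonempty cliques, $F$ is a possibly empty clique, $B_1,B_2,B_3$ are pairwise anticomplete, $C_1,C_2,C_3$ are pairwise complete; there is $i^*\in\{1,2,3\}$ such that $A$ is complete to $(B_1\cup B_2\cup B_3)\setminus B_{i^*}$ and $A$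 can be ordered $a_1,\dots,a_t$ with $N(a_t)\cap B_{i^*}\subseteq\cdots\subseteq N(a_1)\cap B_{i^*}=B_{i^*}$; $A$ is anticomplete to $C_1\cup C_2\cup C_3$; each $B_i$ is complete to $C_i$ and anticomplete to $C_j$ for $j\ne i$; and there is $j^*$ such that $F$ is complete to $V(Q)\setminus(B_{j^*}\cup C_{j^*}\cup F)$ and anticomplete to $B_{j^*}\cup C_{j^*}$. *)

theory Defs
  imports Main
begin

definition graph :: "'a set \<Rightarrow> ('a \<Rightarrow> 'a \<Rightarrow> bool) \<Rightarrow> bool" where
  "graph V E \<longleftrightarrow> finite V \<and> V \<noteq> {} \<and> (\<forall>x y. E x y \<longrightarrow> x \<in> V \<and> y \<in> V)
     \<and> (\<forall>x y. E x y \<longrightarrow> E y x) \<and> (\<forall>x. \<not> E x x)"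

definition has_induced :: "'b set \<Rightarrow> ('b \<Rightarrow> 'b \<Rightarrow> bool) \<Rightarrow> 'a set \<Rightarrow> ('a \<Rightarrow> 'a \<Rightarrow> bool) \<Rightarrow> bool" where
  "has_induced VH EH V E \<longleftrightarrow>
     (\<exists>f. inj_on f VH \<and> f ` VH \<subseteq> V \<and> (\<forall>x\<in>VH. \<forall>y\<in>VH. E (f x) (f y) \<longleftrightarrow> EH x y))"

definition sym_edges :: "(nat \<times> nat) list \<Rightarrow> nat \<Rightarrow> nat \<Rightarrow> bool" where
  "sym_edges L x y \<longleftrightarrow> (x, y) \<in> set L \<or> (y, x) \<in> set L"

definition cycle_V :: "nat \<Rightarrow> nat set" where "cycle_V k = {0..<k}"
definition cycle_E :: "nat \<Rightarrow> nat \<Rightarrow> nat \<Rightarrow> bool" where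
  "cycle_E k x y \<longleftrightarrow> x < k \<and> y < k \<and> (y = (x + 1) mod k \<or> x = (y + 1) mod k)"

definition twoP3_V :: "nat set" where "twoP3_V = {0..<6}"
definition twoP3_E :: "nat \<Rightarrow> nat \<Rightarrow> bool" where
  "twoP3_E = sym_edges [(0,1),(1,2),(3,4),(4,5)]"

text \<open>T_0 with p=0, q=1, u0=2, u1=3, u2=4, u3=5, w1=6, w2=7, w3=8.\<close>
definition T0_V :: "nat set" where "T0_V = {0..<9}"
definition T0_E :: "nat \<Rightarrow> nat \<Rightarrow> bool" where
  "T0_E = sym_edges [(0,1),(0,2),(0,4),(0,5),(1,3),(1,4),(1,5),
                     (2,6),(3,6),(4,7),(5,8),(6,7),(6,8),(7,8)]"

text \<open>3-pentagon with a=0, b1=1, b2=2, b3=3, c1=4, c2=5, c3=6.\<close>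
definition pent3_V :: "nat set" where "pent3_V = {0..<7}"
definition pent3_E :: "nat \<Rightarrow> nat \<Rightarrow> bool" where
  "pent3_E = sym_edges [(0,1),(0,2),(0,3),(4,5),(4,6),(5,6),(1,4),(2,5),(3,6)]"

definition connected_graph :: "'a set \<Rightarrow> ('a \<Rightarrow> 'a \<Rightarrow> bool) \<Rightarrow> bool" where
  "connected_graph V E \<longleftrightarrow>
     (\<forall>x\<in>V. \<forall>y\<in>V. (x, y) \<in> {(a, b). a \<in> V \<and> b \<in> V \<and> E a b}\<^sup>*)"

definition complement :: "'a set \<Rightarrow> ('a \<Rightarrow> 'a \<Rightarrow> bool) \<Rightarrow> 'a \<Rightarrow> 'a \<Rightarrow> bool" where
  "complement V E x y \<longleftrightarrow> x \<in> V \<and> y \<in> V \<and> x \<noteq> y \<and> \<not> E x y"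

definition anticonnected :: "'a set \<Rightarrow> ('a \<Rightarrow> 'a \<Rightarrow> bool) \<Rightarrow> bool" where
  "anticonnected V E \<longleftrightarrow> connected_graph V (complement V E)"

definition simplicial :: "'a set \<Rightarrow> ('a \<Rightarrow> 'a \<Rightarrow> bool) \<Rightarrow> 'a \<Rightarrow> bool" where
  "simplicial V E v \<longleftrightarrow> v \<in> V \<and> (\<forall>x y. E v x \<and> E v y \<and> x \<noteq> y \<longrightarrow> E x y)"

definition universal :: "'a set \<Rightarrow> ('a \<Rightarrow> 'a \<Rightarrow> bool) \<Rightarrow> 'a \<Rightarrow> bool" where
  "universal V E v \<longleftrightarrow> v \<in> V \<and> (\<forall>u\<in>V. u \<noteq> v \<longrightarrow> E v u)"

definition clique :: "'a set \<Rightarrow> ('a \<Rightarrow> 'a \<Rightarrow> bool) \<Rightarrow> 'a set \<Rightarrow> bool" where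
  "clique V E X \<longleftrightarrow> X \<subseteq> V \<and> (\<forall>x\<in>X. \<forall>y\<in>X. x \<noteq> y \<longrightarrow> E x y)"

definition complete_to :: "('a \<Rightarrow> 'a \<Rightarrow> bool) \<Rightarrow> 'a set \<Rightarrow> 'a set \<Rightarrow> bool" where
  "complete_to E X Y \<longleftrightarrow> (\<forall>x\<in>X. \<forall>y\<in>Y. E x y)"

definition anticomplete_to :: "('a \<Rightarrow> 'a \<Rightarrow> bool) \<Rightarrow> 'a set \<Rightarrow> 'a set \<Rightarrow> bool" where
  "anticomplete_to E X Y \<longleftrightarrow> (\<forall>x\<in>X. \<forall>y\<in>Y. \<not> E x y)"

definition nbhd :: "('a \<Rightarrow> 'a \<Rightarrow> bool) \<Rightarrow> 'a \<Rightarrow> 'a set" where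
  "nbhd E v = {u. E v u}"

definition five_basket :: "'a set \<Rightarrow> ('a \<Rightarrow> 'a \<Rightarrow> bool) \<Rightarrow> bool" where
  "five_basket V E \<longleftrightarrow>
   (\<exists>A B C F istar jstar.
      (let L = [A, B 1, B 2, B 3, C 1, C 2, C 3, F] in
        \<Union>(set L) = V \<and> (\<forall>i<8. \<forall>j<8. i \<noteq> j \<longrightarrow> L ! i \<inter> L ! j = {}))
    \<and> A \<noteq> {} \<and> clique V E A
    \<and> (\<forall>i\<in>{1,2,3::nat}. B i \<noteq> {} \<and> clique V E (B i) \<and> C i \<noteq> {} \<and> clique V E (C i))
    \<and> clique V E F
    \<and> (\<forall>i\<in>{1,2,3::nat}. \<forall>j\<in>{1,2,3}. i \<noteq> j \<longrightarrow>
          anticomplete_to E (B i) (B j) \<and> complete_to E (C i) (C j))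
    \<and> istar \<in> {1,2,3::nat}
    \<and> (\<forall>i\<in>{1,2,3::nat}. i \<noteq> istar \<longrightarrow> complete_to E A (B i))
    \<and> (\<exists>as. distinct as \<and> set as = A
           \<and> nbhd E (as ! 0) \<inter> B istar = B istar
           \<and> (\<forall>k. Suc k < length as \<longrightarrow>
                 nbhd E (as ! Suc k) \<inter> B istar \<subseteq> nbhd E (as ! k) \<inter> B istar))
    \<and> (\<forall>i\<in>{1,2,3::nat}. anticomplete_to E A (C i))
    \<and> (\<forall>i\<in>{1,2,3::nat}. complete_to E (B i) (C i)
          \<and> (\<forall>j\<in>{1,2,3::nat}. j \<noteq> i \<longrightarrow> anticomplete_to E (B i) (C j)))
    \<and> jstar \<in> {1,2,3::nat}
    \<and> complete_to E F (V - (B jstar \<union> C jstar \<union> F))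
    \<and> anticomplete_to E F (B jstar \<union> C jstar))"

end

theory Submission
  imports Defs
begin

(* A 5-basket is a blow-up of an eight-vertex pattern on the parts A, B_1, B_2, B_3, C_1, C_2, C_3, F:
   every part is a clique, and the adjacency of two vertices is determined by their parts, except
   between A and B_i*, where the neighbourhoods in B_i* of the vertices of A form a chain, so that no
   two edges between A and B_i* induce a 2K_2. Labelling an induced copy of a graph H by the parts of
   its vertices therefore gives a labelling of H compatible with the pattern; for 2P_3, C_4, C_6, C_7
   and T_0 an exhaustive search, run by evaluation for every choice of i* and j*, finds none.
   One vertex from each of A, B_i, C_i, taking the vertex of A that is complete to B_i*, induces a
   3-pentagon. Every vertex is non-adjacent to one of these seven representatives, which in turn is the
   representative of A or non-adjacent to it; this gives anticonnectedness and excludes universal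
   vertices. Every vertex also has two non-adjacent neighbours among the representatives, so none is
   simplicial. *)

section \<open>Graphs following an adjacency template\<close>

definition crossing :: "('a \<Rightarrow> 'a \<Rightarrow> bool) \<Rightarrow> 'a \<Rightarrow> 'a \<Rightarrow> 'a \<Rightarrow> 'a \<Rightarrow> bool" where
  "crossing E a a' b b' \<longleftrightarrow> E a b \<and> E a' b' \<and> \<not> E a b' \<and> \<not> E a' b"

lemma crossing_swap: "crossing E a a' b b' \<longleftrightarrow> crossing E a' a b' b"
  unfolding crossing_def by blast

lemma not_crossing_if_nbhd_subset:
  assumes "nbhd E a \<inter> X \<subseteq> nbhd E a' \<inter> X" and "b \<in> X" and "b' \<in> X"
  shows "\<not> crossing E a a' b b'"
  using assms unfolding crossing_def nbhd_def by blast

(* Some b in the template T forces the adjacency b between distinct vertices with these labels and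
   None leaves it free; between the labels la and lb no induced 2K_2 may cross. *)
definition follows_template ::
  "'a set \<Rightarrow> ('a \<Rightarrow> 'a \<Rightarrow> bool) \<Rightarrow> ('a \<Rightarrow> 'l) \<Rightarrow> ('l \<Rightarrow> 'l \<Rightarrow> bool option) \<Rightarrow> 'l \<Rightarrow> 'l \<Rightarrow> bool"
where
  "follows_template V E lab T la lb \<longleftrightarrow>
     (\<forall>u\<in>V. \<forall>v\<in>V. u \<noteq> v \<longrightarrow> T (lab u) (lab v) \<noteq> Some (\<not> E u v)) \<and>
     (\<forall>a\<in>V. \<forall>a'\<in>V. \<forall>b\<in>V. \<forall>b'\<in>V.
        lab a = la \<longrightarrow> lab a' = la \<longrightarrow> lab b = lb \<longrightarrow> lab b' = lb \<longrightarrow> \<not> crossing E a a' b b')"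

lemma follows_template_induced:
  assumes template: "follows_template V E lab T la lb"
    and "inj_on f VH" and "f ` VH \<subseteq> V" and induced: "\<forall>x\<in>VH. \<forall>y\<in>VH. E (f x) (f y) \<longleftrightarrow> EH x y"
  shows "follows_template VH EH (lab \<circ> f) T la lb"
  unfolding follows_template_def comp_def
proof (intro conjI ballI impI)
  fix x y assume "x \<in> VH" "y \<in> VH" "x \<noteq> y"
  then have "f x \<noteq> f y" and "f x \<in> V" "f y \<in> V"
    using \<open>inj_on f VH\<close> \<open>f ` VH \<subseteq> V\<close> by (auto dest: inj_onD)
  then have "T (lab (f x)) (lab (f y)) \<noteq> Some (\<not> E (f x) (f y))"
    using template unfolding follows_template_def by blast
  then show "T (lab (f x)) (lab (f y)) \<noteq> Some (\<not> EH x y)"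
    using induced \<open>x \<in> VH\<close> \<open>y \<in> VH\<close> by simp
next
  fix x x' y y' assume "x \<in> VH" "x' \<in> VH" "y \<in> VH" "y' \<in> VH"
    and "lab (f x) = la" "lab (f x') = la" "lab (f y) = lb" "lab (f y') = lb"
  moreover have "crossing EH x x' y y' \<longleftrightarrow> crossing E (f x) (f x') (f y) (f y')"
    using induced \<open>x \<in> VH\<close> \<open>x' \<in> VH\<close> \<open>y \<in> VH\<close> \<open>y' \<in> VH\<close> unfolding crossing_def by simp
  ultimately show "\<not> crossing EH x x' y y'"
    using template \<open>f ` VH \<subseteq> V\<close> unfolding follows_template_def by (simp add: image_subset_iff)
qed

section \<open>Exhaustive search for compatible labellings\<close>

definition adjacency_rows :: "(nat \<Rightarrow> nat \<Rightarrow> bool) \<Rightarrow> nat \<Rightarrow> bool list list" where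
  "adjacency_rows EH n = map (\<lambda>k. map (\<lambda>t. EH t k) [0..<k]) [0..<n]"

(* Passing the rows of the adjacency matrix precomputed and guarding the
   recursion by an if-expression make evaluation by the simplifier prune inconsistent branches early. *)
fun labelling_search ::
  "('l \<Rightarrow> 'l \<Rightarrow> bool option) \<Rightarrow> 'l \<Rightarrow> 'l \<Rightarrow> 'l list \<Rightarrow> (nat \<Rightarrow> nat \<Rightarrow> bool) \<Rightarrow> bool list list
     \<Rightarrow> 'l list \<Rightarrow> bool"
where
  "labelling_search T la lb Ls EH [] ls =
     (\<forall>x\<in>set [0..<length ls]. \<forall>x'\<in>set [0..<length ls]. \<forall>y\<in>set [0..<length ls]. \<forall>y'\<in>set [0..<length ls].
        ls ! x = la \<longrightarrow> ls ! x' = la \<longrightarrow> ls ! y = lb \<longrightarrow> ls ! y' = lb \<longrightarrow> \<not> crossing EH x x' y y')"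
| "labelling_search T la lb Ls EH (row # rows) ls =
     list_ex (\<lambda>c. if list_all2 (\<lambda>d b. T d c \<noteq> Some (\<not> b)) ls row
                  then labelling_search T la lb Ls EH rows (ls @ [c]) else False) Ls"

lemma labelling_search_complete:
  assumes template: "follows_template {0..<n} EH g T la lb" and labels: "g ` {0..<n} \<subseteq> set Ls"
  shows "labelling_search T la lb Ls EH (adjacency_rows EH n) []"
proof -
  have "labelling_search T la lb Ls EH (drop k (adjacency_rows EH n)) (map g [0..<k])" if "k \<le> n" for k
    using that
  proof (induction "n - k" arbitrary: k)
    case 0
    then have "k = n" by simp
    then have "drop k (adjacency_rows EH n) = []"
      by (simp add: adjacency_rows_def)
    then show ?case
      using template \<open>k = n\<close> unfolding follows_template_def by auto
  next
    case (Suc m)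
    then have "k < n" by simp
    have rows: "drop k (adjacency_rows EH n) = map (\<lambda>t. EH t k) [0..<k] # drop (Suc k) (adjacency_rows EH n)"
      using \<open>k < n\<close> Cons_nth_drop_Suc[of k "adjacency_rows EH n"] by (simp add: adjacency_rows_def)
    have compatible: "list_all2 (\<lambda>d b. T d (g k) \<noteq> Some (\<not> b)) (map g [0..<k]) (map (\<lambda>t. EH t k) [0..<k])"
      using template \<open>k < n\<close> unfolding follows_template_def by (simp add: list_all2_conv_all_nth)
    have extended: "labelling_search T la lb Ls EH (drop (Suc k) (adjacency_rows EH n)) (map g [0..<k] @ [g k])"
      using Suc.hyps(1)[of "Suc k"] Suc.hyps(2) \<open>k < n\<close> by simp
    have "g k \<in> set Ls"
      using labels \<open>k < n\<close> by auto
    then show ?case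
      unfolding rows labelling_search.simps list_ex_iff
      using compatible extended by (intro bexI[of _ "g k"]) simp_all
  qed
  from this[of 0] show ?thesis by simp
qed

lemma not_has_induced_if_search_fails:
  assumes template: "follows_template V E lab T la lb" and labels: "lab ` V \<subseteq> set Ls"
    and "\<not> labelling_search T la lb Ls EH (adjacency_rows EH n) []"
  shows "\<not> has_induced {0..<n} EH V E"
proof
  assume "has_induced {0..<n} EH V E"
  then obtain f where f: "inj_on f {0..<n}" "f ` {0..<n} \<subseteq> V"
    "\<forall>x\<in>{0..<n}. \<forall>y\<in>{0..<n}. E (f x) (f y) \<longleftrightarrow> EH x y"
    unfolding has_induced_def by blast
  have "follows_template {0..<n} EH (lab \<circ> f) T la lb"
    using follows_template_induced[OF template f] .
  moreover have "(lab \<circ> f) ` {0..<n} \<subseteq> set Ls"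
    using f(2) labels by (auto simp: image_subset_iff)
  ultimately have "labelling_search T la lb Ls EH (adjacency_rows EH n) []"
    by (rule labelling_search_complete)
  with assms(3) show False by contradiction
qed

section \<open>The pattern of a 5-basket\<close>

datatype part = PA | PB nat | PC nat | PF

definition core_parts :: "part list" where
  "core_parts = [PA, PB 1, PB 2, PB 3, PC 1, PC 2, PC 3]"

definition basket_parts :: "part list" where
  "basket_parts = core_parts @ [PF]"

(* Adjacency between the parts A, B_k, C_k, F of a 5-basket with i* = i and j* = j. *)
fun part_adj :: "nat \<Rightarrow> nat \<Rightarrow> part \<Rightarrow> part \<Rightarrow> bool option" where
  "part_adj i j PA PA = Some True"
| "part_adj i j PA (PB k) = (if k = i then None else Some True)"
| "part_adj i j PA (PC k) = Some False"
| "part_adj i j PA PF = Some True"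
| "part_adj i j (PB k) PA = (if k = i then None else Some True)"
| "part_adj i j (PB k) (PB l) = Some (k = l)"
| "part_adj i j (PB k) (PC l) = Some (k = l)"
| "part_adj i j (PB k) PF = Some (k \<noteq> j)"
| "part_adj i j (PC k) PA = Some False"
| "part_adj i j (PC k) (PB l) = Some (k = l)"
| "part_adj i j (PC k) (PC l) = Some True"
| "part_adj i j (PC k) PF = Some (k \<noteq> j)"
| "part_adj i j PF PA = Some True"
| "part_adj i j PF (PB l) = Some (l \<noteq> j)"
| "part_adj i j PF (PC l) = Some (l \<noteq> j)"
| "part_adj i j PF PF = Some True"

definition forbidden_graphs :: "(nat \<times> (nat \<Rightarrow> nat \<Rightarrow> bool)) list" where
  "forbidden_graphs = [(6, twoP3_E), (4, cycle_E 4), (6, cycle_E 6), (7, cycle_E 7), (9, T0_E)]"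

lemma basket_parts_eq: "set basket_parts = {PA, PB 1, PB 2, PB 3, PC 1, PC 2, PC 3, PF}"
  by (auto simp: basket_parts_def core_parts_def)

lemma part_cases:
  assumes "p \<in> set basket_parts"
  obtains "p = PA" | k where "k \<in> {1, 2, 3}" "p = PB k" | k where "k \<in> {1, 2, 3}" "p = PC k" | "p = PF"
  using assms unfolding basket_parts_eq by blast

(* Adjacency of any vertex of part p to the chosen representative of part q, where the representative
   of A is complete to B_i*. *)
definition part_rep_adj :: "nat \<Rightarrow> nat \<Rightarrow> part \<Rightarrow> part \<Rightarrow> bool option" where
  "part_rep_adj i j p q = (if p = PB i \<and> q = PA then Some True else part_adj i j p q)"

lemma pent3_pattern:
  assumes "i \<in> {1, 2, 3}" and "j \<in> {1, 2, 3}"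
  shows "\<forall>x\<in>pent3_V. \<forall>y\<in>pent3_V. x \<noteq> y \<longrightarrow>
           part_rep_adj i j (core_parts ! x) (core_parts ! y) = Some (pent3_E x y)
         \<or> part_rep_adj i j (core_parts ! y) (core_parts ! x) = Some (pent3_E x y)"
  using assms unfolding pent3_V_def atLeastLessThan_upt by (elim insertE emptyE; hypsubst; code_simp)

lemma nonneighbour_pattern:
  assumes "i \<in> {1, 2, 3}" and "j \<in> {1, 2, 3}"
  shows "\<forall>p\<in>set basket_parts. \<exists>q\<in>set core_parts. q \<noteq> p \<and> part_rep_adj i j p q = Some False
           \<and> (q = PA \<or> part_rep_adj i j q PA = Some False)"
  using assms by (elim insertE emptyE; hypsubst; code_simp)

lemma nonadjacent_neighbours_pattern:
  assumes "i \<in> {1, 2, 3}" and "j \<in> {1, 2, 3}"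
  shows "\<forall>p\<in>set basket_parts. \<exists>q\<in>set core_parts. \<exists>q'\<in>set core_parts. q \<noteq> p \<and> q' \<noteq> p
           \<and> part_rep_adj i j p q = Some True \<and> part_rep_adj i j p q' = Some True
           \<and> part_rep_adj i j q q' = Some False"
  using assms by (elim insertE emptyE; hypsubst; code_simp)

lemma basket_template_excludes_forbidden_graphs:
  assumes "i \<in> {1, 2, 3}" and "j \<in> {1, 2, 3}"
  shows "\<forall>(n, EH) \<in> set forbidden_graphs.
           \<not> labelling_search (part_adj i j) PA (PB i) basket_parts EH (adjacency_rows EH n) []"
  using assms unfolding forbidden_graphs_def list.set ball_simps prod.case
  by (elim insertE emptyE; hypsubst; code_simp)

section \<open>5-baskets\<close>

lemma connected_graph_if_reaches_root:
  assumes sym: "\<And>x y. R x y \<Longrightarrow> R y x" and "r \<in> V"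
    and reach: "\<And>x. x \<in> V \<Longrightarrow> (x, r) \<in> {(a, b). a \<in> V \<and> b \<in> V \<and> R a b}\<^sup>*"
  shows "connected_graph V R"
proof -
  let ?S = "{(a, b). a \<in> V \<and> b \<in> V \<and> R a b}"
  have "?S\<inverse> = ?S"
    using sym by auto
  have "(r, y) \<in> ?S\<^sup>*" if "y \<in> V" for y
  proof -
    have "(r, y) \<in> (?S\<inverse>)\<^sup>*"
      using reach[OF that] by (rule rtrancl_converseI)
    with \<open>?S\<inverse> = ?S\<close> show ?thesis by simp
  qed
  then show ?thesis
    unfolding connected_graph_def using reach by (meson rtrancl_trans)
qed

locale five_basket_structure =
  fixes V :: "'a set" and E :: "'a \<Rightarrow> 'a \<Rightarrow> bool"
    and A :: "'a set" and B C :: "nat \<Rightarrow> 'a set" and F :: "'a set"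
    and istar jstar :: nat and as :: "'a list"
  assumes graph: "graph V E"
    and partition: "let L = [A, B 1, B 2, B 3, C 1, C 2, C 3, F] in
        \<Union>(set L) = V \<and> (\<forall>i<8. \<forall>j<8. i \<noteq> j \<longrightarrow> L ! i \<inter> L ! j = {})"
    and A_nonempty: "A \<noteq> {}" and A_clique: "clique V E A"
    and BC_cliques: "\<forall>i\<in>{1,2,3::nat}. B i \<noteq> {} \<and> clique V E (B i) \<and> C i \<noteq> {} \<and> clique V E (C i)"
    and F_clique: "clique V E F"
    and BB_CC: "\<forall>i\<in>{1,2,3::nat}. \<forall>j\<in>{1,2,3}. i \<noteq> j \<longrightarrow>
          anticomplete_to E (B i) (B j) \<and> complete_to E (C i) (C j)"
    and istar_range: "istar \<in> {1,2,3}"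
    and A_B: "\<forall>i\<in>{1,2,3::nat}. i \<noteq> istar \<longrightarrow> complete_to E A (B i)"
    and as_distinct: "distinct as" and as_set: "set as = A"
    and as_first: "nbhd E (as ! 0) \<inter> B istar = B istar"
    and as_nested: "\<forall>k. Suc k < length as \<longrightarrow>
          nbhd E (as ! Suc k) \<inter> B istar \<subseteq> nbhd E (as ! k) \<inter> B istar"
    and A_C: "\<forall>i\<in>{1,2,3::nat}. anticomplete_to E A (C i)"
    and B_C: "\<forall>i\<in>{1,2,3::nat}. complete_to E (B i) (C i)
          \<and> (\<forall>j\<in>{1,2,3::nat}. j \<noteq> i \<longrightarrow> anticomplete_to E (B i) (C j))"
    and jstar_range: "jstar \<in> {1,2,3}"
    and F_complete: "complete_to E F (V - (B jstar \<union> C jstar \<union> F))"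
    and F_anticomplete: "anticomplete_to E F (B jstar \<union> C jstar)"

lemma five_basket_structure_exists:
  assumes "graph V E" and "five_basket V E"
  shows "\<exists>A B C F istar jstar as. five_basket_structure V E A B C F istar jstar as"
  using assms unfolding five_basket_def five_basket_structure_def
  by (elim exE conjE) (intro exI conjI; assumption)

context five_basket_structure
begin

definition part_set :: "part \<Rightarrow> 'a set" where
  "part_set p = (case p of PA \<Rightarrow> A | PB k \<Rightarrow> B k | PC k \<Rightarrow> C k | PF \<Rightarrow> F)"

lemma parts_cover: "V = (\<Union>p\<in>set basket_parts. part_set p)"
  using partition by (simp add: Let_def basket_parts_eq part_set_def Un_ac)

lemma parts_disjoint:
  assumes "p \<in> set basket_parts" and "q \<in> set basket_parts" and "p \<noteq> q"
  shows "part_set p \<inter> part_set q = {}"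
proof -
  have "length basket_parts = 8"
    by (simp add: basket_parts_def core_parts_def)
  moreover obtain i j where "i < length basket_parts" "p = basket_parts ! i"
    and "j < length basket_parts" "q = basket_parts ! j"
    using assms(1,2) by (metis in_set_conv_nth)
  moreover have "map part_set basket_parts = [A, B 1, B 2, B 3, C 1, C 2, C 3, F]"
    by (simp add: basket_parts_def core_parts_def part_set_def)
  ultimately show ?thesis
    using partition assms(3) unfolding Let_def by (metis nth_map)
qed

definition part_of :: "'a \<Rightarrow> part" where
  "part_of v = (THE p. p \<in> set basket_parts \<and> v \<in> part_set p)"

lemma part_of_eqI:
  assumes "p \<in> set basket_parts" and "v \<in> part_set p"
  shows "part_of v = p"
  unfolding part_of_def using assms parts_disjoint by (auto intro: the_equality)

lemma part_of_in_parts: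
  assumes "v \<in> V"
  shows "part_of v \<in> set basket_parts" and "v \<in> part_set (part_of v)"
  using assms part_of_eqI parts_cover by auto

lemma E_sym: "E u v \<longleftrightarrow> E v u"
  using graph unfolding graph_def by blast

lemma E_irrefl: "\<not> E v v"
  using graph unfolding graph_def by blast

lemma adj_same_part:
  assumes "u \<in> V" and "v \<in> V" and "part_of u = part_of v" and "u \<noteq> v"
  shows "E u v"
proof -
  have "u \<in> part_set (part_of u)" and "v \<in> part_set (part_of u)"
    using part_of_in_parts assms by metis+
  then show ?thesis
    using A_clique BC_cliques F_clique \<open>u \<noteq> v\<close> unfolding clique_def part_set_def
    by (cases rule: part_cases[OF part_of_in_parts(1)[OF assms(1)]]) auto
qed

lemma adj_A_B: "a \<in> A \<Longrightarrow> b \<in> B k \<Longrightarrow> k \<in> {1, 2, 3} \<Longrightarrow> k \<noteq> istar \<Longrightarrow> E a b \<and> E b a"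
  using A_B E_sym unfolding complete_to_def by blast

lemma nonadj_A_C: "a \<in> A \<Longrightarrow> c \<in> C k \<Longrightarrow> k \<in> {1, 2, 3} \<Longrightarrow> \<not> E a c \<and> \<not> E c a"
  using A_C E_sym unfolding anticomplete_to_def by blast

lemma nonadj_B_B:
  "b \<in> B k \<Longrightarrow> b' \<in> B l \<Longrightarrow> k \<in> {1, 2, 3} \<Longrightarrow> l \<in> {1, 2, 3} \<Longrightarrow> k \<noteq> l \<Longrightarrow> \<not> E b b'"
  using BB_CC unfolding anticomplete_to_def by blast

lemma adj_B_C:
  assumes "b \<in> B k" and "c \<in> C l" and "k \<in> {1, 2, 3}" and "l \<in> {1, 2, 3}"
  shows "(E b c \<longleftrightarrow> k = l) \<and> (E c b \<longleftrightarrow> k = l)"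
proof -
  have "complete_to E (B k) (C k)" and "l \<noteq> k \<Longrightarrow> anticomplete_to E (B k) (C l)"
    using B_C assms(3,4) by blast+
  then show ?thesis
    using assms(1,2) E_sym unfolding complete_to_def anticomplete_to_def by blast
qed

lemma adj_C_C:
  "c \<in> C k \<Longrightarrow> c' \<in> C l \<Longrightarrow> k \<in> {1, 2, 3} \<Longrightarrow> l \<in> {1, 2, 3} \<Longrightarrow> k \<noteq> l \<Longrightarrow> E c c'"
  using BB_CC unfolding complete_to_def by blast

lemma adj_F:
  assumes "f \<in> F" and "v \<in> V" and "part_of v \<noteq> PF"
  shows "(E f v \<longleftrightarrow> part_of v \<noteq> PB jstar \<and> part_of v \<noteq> PC jstar)
    \<and> (E v f \<longleftrightarrow> part_of v \<noteq> PB jstar \<and> part_of v \<noteq> PC jstar)"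
proof -
  have "PB jstar \<in> set basket_parts" "PC jstar \<in> set basket_parts" "PF \<in> set basket_parts"
    using jstar_range by (auto simp: basket_parts_eq)
  then have "v \<in> B jstar \<longleftrightarrow> part_of v = PB jstar" "v \<in> C jstar \<longleftrightarrow> part_of v = PC jstar" "v \<notin> F"
    using part_of_eqI part_of_in_parts(2)[OF \<open>v \<in> V\<close>] assms(3) by (force simp: part_set_def)+
  then show ?thesis
    using assms(1,2) F_complete F_anticomplete E_sym unfolding complete_to_def anticomplete_to_def by blast
qed

lemma adj_by_part:
  assumes "u \<in> V" and "v \<in> V" and "u \<noteq> v"
    and "part_adj istar jstar (part_of u) (part_of v) = Some b"
  shows "E u v = b"
proof -
  have parts: "part_of u \<in> set basket_parts" "part_of v \<in> set basket_parts"
    and "u \<in> part_set (part_of u)" "v \<in> part_set (part_of v)"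
    using part_of_in_parts assms(1,2) by auto
  then show ?thesis
    using assms
    by (cases rule: part_cases[OF parts(1)]; cases rule: part_cases[OF parts(2)])
      (auto simp: part_set_def adj_same_part adj_A_B nonadj_A_C nonadj_B_B adj_B_C adj_C_C adj_F
        split: if_split_asm)
qed

lemma A_nbhds_nested:
  assumes "a \<in> A" and "a' \<in> A"
  shows "nbhd E a \<inter> B istar \<subseteq> nbhd E a' \<inter> B istar \<or> nbhd E a' \<inter> B istar \<subseteq> nbhd E a \<inter> B istar"
proof -
  let ?N = "\<lambda>x. nbhd E x \<inter> B istar"
  have sorted: "sorted_wrt (\<lambda>x y. ?N y \<subseteq> ?N x) as"
    using as_nested by (subst sorted_wrt_iff_nth_Suc_transp) (auto simp: transp_def)
  obtain i j where "i < length as" "a = as ! i" "j < length as" "a' = as ! j"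
    using assms as_set by (metis in_set_conv_nth)
  then show ?thesis
    using sorted_wrt_nth_less[OF sorted] by (cases i j rule: linorder_cases) auto
qed

lemma follows_basket_template: "follows_template V E part_of (part_adj istar jstar) PA (PB istar)"
  unfolding follows_template_def
proof (intro conjI ballI impI)
  fix u v assume "u \<in> V" "v \<in> V" "u \<noteq> v"
  then show "part_adj istar jstar (part_of u) (part_of v) \<noteq> Some (\<not> E u v)"
    using adj_by_part by fastforce
next
  fix a a' b b' assume "a \<in> V" "a' \<in> V" "b \<in> V" "b' \<in> V"
    and "part_of a = PA" "part_of a' = PA" "part_of b = PB istar" "part_of b' = PB istar"
  then have "a \<in> A" "a' \<in> A" "b \<in> B istar" "b' \<in> B istar"
    using part_of_in_parts(2) by (force simp: part_set_def)+
  then show "\<not> crossing E a a' b b'"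
    using A_nbhds_nested not_crossing_if_nbhd_subset crossing_swap by metis
qed

lemma no_forbidden_induced:
  assumes "(n, EH) \<in> set forbidden_graphs"
  shows "\<not> has_induced {0..<n} EH V E"
proof (rule not_has_induced_if_search_fails[OF follows_basket_template])
  show "part_of ` V \<subseteq> set basket_parts"
    using part_of_in_parts(1) by blast
  show "\<not> labelling_search (part_adj istar jstar) PA (PB istar) basket_parts EH (adjacency_rows EH n) []"
    using basket_template_excludes_forbidden_graphs[OF istar_range jstar_range] assms by blast
qed

definition rep :: "part \<Rightarrow> 'a" where
  "rep p = (if p = PA then as ! 0 else SOME v. v \<in> part_set p)"

lemma rep_in_part:
  assumes "p \<in> set core_parts"
  shows "rep p \<in> part_set p"
proof (cases "p = PA")
  case True
  have "as \<noteq> []"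
    using as_set A_nonempty by auto
  then have "as ! 0 \<in> A"
    using as_set by (metis length_greater_0_conv nth_mem)
  then show ?thesis
    using True by (simp add: rep_def part_set_def)
next
  case False
  then have "part_set p \<noteq> {}"
    using assms BC_cliques by (auto simp: core_parts_def part_set_def)
  then show ?thesis
    using False unfolding rep_def by (simp add: some_in_eq)
qed

lemma rep_in_V: "p \<in> set core_parts \<Longrightarrow> rep p \<in> V"
  using rep_in_part parts_cover by (auto simp: basket_parts_def)

lemma part_of_rep: "p \<in> set core_parts \<Longrightarrow> part_of (rep p) = p"
  using rep_in_part part_of_eqI by (simp add: basket_parts_def)

lemma adj_rep:
  assumes "v \<in> V" and "q \<in> set core_parts" and "q \<noteq> part_of v"
    and "part_rep_adj istar jstar (part_of v) q = Some b"
  shows "E v (rep q) = b"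
proof (cases "part_of v = PB istar \<and> q = PA")
  case True
  then have "v \<in> B istar"
    using part_of_in_parts(2)[OF \<open>v \<in> V\<close>] by (simp add: part_set_def)
  then have "E (rep PA) v"
    using as_first unfolding nbhd_def by (auto simp: rep_def)
  then show ?thesis
    using True assms(4) E_sym by (simp add: part_rep_adj_def)
next
  case False
  then have "part_adj istar jstar (part_of v) q = Some b"
    using assms(4) by (auto simp: part_rep_adj_def)
  then have "part_adj istar jstar (part_of v) (part_of (rep q)) = Some b"
    using part_of_rep[OF assms(2)] by simp
  moreover have "v \<noteq> rep q"
    using assms(2,3) part_of_rep by auto
  ultimately show ?thesis
    using adj_by_part assms(1,2) rep_in_V by blast
qed

lemma rep_eq_iff: "p \<in> set core_parts \<Longrightarrow> q \<in> set core_parts \<Longrightarrow> rep p = rep q \<longleftrightarrow> p = q"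
  using part_of_rep by metis

lemma adj_reps:
  assumes "p \<in> set core_parts" and "q \<in> set core_parts" and "p \<noteq> q"
    and "part_rep_adj istar jstar p q = Some b"
  shows "E (rep p) (rep q) = b"
  using adj_rep[of "rep p" q b] assms rep_in_V part_of_rep by simp

lemma has_induced_pent3: "has_induced pent3_V pent3_E V E"
  unfolding has_induced_def
proof (intro exI conjI)
  let ?f = "\<lambda>x. rep (core_parts ! x)"
  have "length core_parts = 7"
    by (simp add: core_parts_def)
  then have core: "core_parts ! x \<in> set core_parts" if "x \<in> pent3_V" for x
    using that by (simp add: pent3_V_def)
  have parts_inj: "core_parts ! x = core_parts ! y \<longleftrightarrow> x = y" if "x \<in> pent3_V" "y \<in> pent3_V" for x y
    using that by (simp add: pent3_V_def core_parts_def nth_eq_iff_index_eq)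
  show "inj_on ?f pent3_V"
  proof (rule inj_onI)
    fix x y assume "x \<in> pent3_V" "y \<in> pent3_V" "?f x = ?f y"
    then have "core_parts ! x = core_parts ! y"
      using core rep_eq_iff by blast
    with parts_inj show "x = y"
      using \<open>x \<in> pent3_V\<close> \<open>y \<in> pent3_V\<close> by blast
  qed
  show "?f ` pent3_V \<subseteq> V"
    using core rep_in_V by blast
  show "\<forall>x\<in>pent3_V. \<forall>y\<in>pent3_V. E (?f x) (?f y) \<longleftrightarrow> pent3_E x y"
  proof (intro ballI)
    fix x y assume "x \<in> pent3_V" "y \<in> pent3_V"
    show "E (?f x) (?f y) \<longleftrightarrow> pent3_E x y"
    proof (cases "x = y")
      case True
      moreover have "\<not> pent3_E y y"
        by (auto simp: pent3_E_def sym_edges_def)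
      ultimately show ?thesis
        using E_irrefl by simp
    next
      case False
      let ?p = "core_parts ! x" and ?q = "core_parts ! y"
      have "?p \<noteq> ?q"
        using parts_inj False \<open>x \<in> pent3_V\<close> \<open>y \<in> pent3_V\<close> by blast
      consider "part_rep_adj istar jstar ?p ?q = Some (pent3_E x y)"
        | "part_rep_adj istar jstar ?q ?p = Some (pent3_E x y)"
        using pent3_pattern[OF istar_range jstar_range] \<open>x \<in> pent3_V\<close> \<open>y \<in> pent3_V\<close> False by blast
      then show ?thesis
        using adj_reps core \<open>x \<in> pent3_V\<close> \<open>y \<in> pent3_V\<close> \<open>?p \<noteq> ?q\<close> E_sym by cases metis+
    qed
  qed
qed

lemma nonneighbour_rep_exists:
  assumes "v \<in> V"
  obtains q where "q \<in> set core_parts" "rep q \<noteq> v" "\<not> E v (rep q)"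
    and "q = PA \<or> (rep q \<noteq> rep PA \<and> \<not> E (rep q) (rep PA))"
proof -
  obtain q where q: "q \<in> set core_parts" "q \<noteq> part_of v"
    "part_rep_adj istar jstar (part_of v) q = Some False"
    "q = PA \<or> part_rep_adj istar jstar q PA = Some False"
    using nonneighbour_pattern[OF istar_range jstar_range] part_of_in_parts(1)[OF assms] by blast
  have PA: "PA \<in> set core_parts"
    by (simp add: core_parts_def)
  have "rep q \<noteq> v"
    using q(1,2) part_of_rep by auto
  moreover have "\<not> E v (rep q)"
    using adj_rep[OF assms q(1-3)] by simp
  moreover have "q = PA \<or> (rep q \<noteq> rep PA \<and> \<not> E (rep q) (rep PA))"
    using q(4) adj_reps[OF q(1) PA] rep_eq_iff[OF q(1) PA] by auto
  ultimately show ?thesis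
    using that q(1) by blast
qed

lemma anticonnected_basket: "anticonnected V E"
  unfolding anticonnected_def
proof (rule connected_graph_if_reaches_root)
  let ?S = "{(a, b). a \<in> V \<and> b \<in> V \<and> complement V E a b}"
  show "complement V E y x" if "complement V E x y" for x y
    using that E_sym unfolding complement_def by blast
  have PA: "PA \<in> set core_parts"
    by (simp add: core_parts_def)
  then show "rep PA \<in> V"
    by (rule rep_in_V)
  show "(v, rep PA) \<in> ?S\<^sup>*" if v: "v \<in> V" for v
  proof -
    obtain q where q: "q \<in> set core_parts" "rep q \<noteq> v" "\<not> E v (rep q)"
      "q = PA \<or> (rep q \<noteq> rep PA \<and> \<not> E (rep q) (rep PA))"
      using nonneighbour_rep_exists[OF v] by blast
    then have "(v, rep q) \<in> ?S"
      using v rep_in_V unfolding complement_def by auto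
    moreover have "(rep q, rep PA) \<in> ?S\<^sup>*"
      using q PA rep_in_V unfolding complement_def by auto
    ultimately show ?thesis
      by (rule converse_rtrancl_into_rtrancl)
  qed
qed

lemma not_universal: "v \<in> V \<Longrightarrow> \<not> universal V E v"
  using nonneighbour_rep_exists rep_in_V unfolding universal_def by metis

lemma not_simplicial:
  assumes "v \<in> V"
  shows "\<not> simplicial V E v"
proof -
  obtain q q' where q: "q \<in> set core_parts" "q' \<in> set core_parts" "q \<noteq> part_of v" "q' \<noteq> part_of v"
    "part_rep_adj istar jstar (part_of v) q = Some True" "part_rep_adj istar jstar (part_of v) q' = Some True"
    "part_rep_adj istar jstar q q' = Some False"
    using nonadjacent_neighbours_pattern[OF istar_range jstar_range] part_of_in_parts(1)[OF assms] by blast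
  then have "q \<noteq> q'"
    by (cases q') (auto simp: part_rep_adj_def)
  then have "rep q \<noteq> rep q'" and "\<not> E (rep q) (rep q')"
    using rep_eq_iff adj_reps q by auto
  moreover have "E v (rep q)" and "E v (rep q')"
    using adj_rep assms q by auto
  ultimately show ?thesis
    unfolding simplicial_def by blast
qed

end

theorem proposition5p2:
  fixes V :: "'a set" and E :: "'a \<Rightarrow> 'a \<Rightarrow> bool"
  assumes "graph V E" and "five_basket V E"
  shows "\<not> has_induced twoP3_V twoP3_E V E
       \<and> \<not> has_induced (cycle_V 4) (cycle_E 4) V E
       \<and> \<not> has_induced (cycle_V 6) (cycle_E 6) V E
       \<and> \<not> has_induced (cycle_V 7) (cycle_E 7) V E
       \<and> \<not> has_induced T0_V T0_E V E
       \<and> has_induced pent3_V pent3_E V E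
       \<and> anticonnected V E
       \<and> (\<forall>v\<in>V. \<not> simplicial V E v \<and> \<not> universal V E v)"
proof -
  obtain A B C F istar jstar as where "five_basket_structure V E A B C F istar jstar as"
    using five_basket_structure_exists[OF assms] by blast
  then interpret five_basket_structure V E A B C F istar jstar as .
  have "\<not> has_induced {0..<n} EH V E" if "(n, EH) \<in> set forbidden_graphs" for n EH
    using that by (rule no_forbidden_induced)
  then show ?thesis
    unfolding twoP3_V_def cycle_V_def T0_V_def
    using has_induced_pent3 anticonnected_basket not_simplicial not_universal
    by (simp add: forbidden_graphs_def)
qed

end
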